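(* Let $G=(V,E,T,c)$ be a $k$-terminal network and let $S\subset T$ with $S\neq\emptyset,T$. Then there exists a component $C\in CC(E_S)$ that is elementary, i.e. $\delta(C)=E_{C\cap T}$ and $|CC(\delta(C))|=2$.
   Context: A $k$-terminal network $G=(V,E,T,c)$ is a finite connected undirected graph $(V,E)$ with edge weights (capacities) $c:E\to\mathbb{R}_{>0}$ and a set $T\subseteq V$ of $|T|=k$ terminals. For $F\subseteq E$ let $c(F)=\sum_{e\in F}c(e)$; for $W\subseteq V$ let $\delta(W)$ be the set of edges with exactly one endpoint in $W$. For $S\subset T$ with $S\neq\emptyset,T$, write $\bar S=T\setminus S$; a cut $(W,V\setminus W)$ is $S$-separating if $W\cap T\in\{S,\bar S\}$, and $\mathrm{mincut}_G(S)$ is the minimum of $c(\delta(W))$ over all $S$-separating cuts. It is assumed (e.g. by a generic perturbation of the weights) that the minimizing cutset is unique; it is denoted $E_S$ (so $E_S=E_{\bar S}$). For $F\subseteq E$, $CC(F)$ denotes the set of vertex sets of connected components of $(V,E\setminus F)$. *)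

theory Defs
  imports Complex_Main
begin

definition cutset :: "'v set set \<Rightarrow> 'v set \<Rightarrow> 'v set set" where
  "cutset E W = {e \<in> E. card (e \<inter> W) = 1}"

definition cost :: "('v set \<Rightarrow> real) \<Rightarrow> 'v set set \<Rightarrow> real" where
  "cost c F = (\<Sum>e\<in>F. c e)"

definition adj :: "'v set set \<Rightarrow> 'v set set \<Rightarrow> ('v \<times> 'v) set" where
  "adj E F = {(u, v). {u, v} \<in> E - F}"

definition CC :: "'v set \<Rightarrow> 'v set set \<Rightarrow> 'v set set \<Rightarrow> 'v set set" where
  "CC V E F = {{v \<in> V. (u, v) \<in> (adj E F)\<^sup>*} | u. u \<in> V}"

definition graph_connected :: "'v set \<Rightarrow> 'v set set \<Rightarrow> bool" where
  "graph_connected V E \<longleftrightarrow> (\<forall>u\<in>V. \<forall>v\<in>V. (u, v) \<in> (adj E {})\<^sup>*)"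

definition k_terminal_network ::
  "'v set \<Rightarrow> 'v set set \<Rightarrow> 'v set \<Rightarrow> ('v set \<Rightarrow> real) \<Rightarrow> nat \<Rightarrow> bool" where
  "k_terminal_network V E T c k \<longleftrightarrow>
     finite V \<and> (\<forall>e\<in>E. e \<subseteq> V \<and> card e = 2) \<and> graph_connected V E \<and>
     (\<forall>e\<in>E. c e > 0) \<and> T \<subseteq> V \<and> card T = k"

definition separating :: "'v set \<Rightarrow> 'v set \<Rightarrow> 'v set \<Rightarrow> 'v set \<Rightarrow> bool" where
  "separating V T S W \<longleftrightarrow> W \<subseteq> V \<and> (W \<inter> T = S \<or> W \<inter> T = T - S)"

definition is_min_cutset ::
  "'v set \<Rightarrow> 'v set set \<Rightarrow> 'v set \<Rightarrow> ('v set \<Rightarrow> real) \<Rightarrow> 'v set \<Rightarrow> 'v set set \<Rightarrow> bool" where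
  "is_min_cutset V E T c S F \<longleftrightarrow>
     (\<exists>W. separating V T S W \<and> F = cutset E W) \<and>
     (\<forall>W. separating V T S W \<longrightarrow> cost c F \<le> cost c (cutset E W))"

definition proper_terminal_subset :: "'v set \<Rightarrow> 'v set \<Rightarrow> bool" where
  "proper_terminal_subset T S \<longleftrightarrow> S \<subseteq> T \<and> S \<noteq> {} \<and> S \<noteq> T"

definition unique_mincuts ::
  "'v set \<Rightarrow> 'v set set \<Rightarrow> 'v set \<Rightarrow> ('v set \<Rightarrow> real) \<Rightarrow> bool" where
  "unique_mincuts V E T c \<longleftrightarrow>
     (\<forall>S. proper_terminal_subset T S \<longrightarrow> (\<exists>!F. is_min_cutset V E T c S F))"

definition ES ::
  "'v set \<Rightarrow> 'v set set \<Rightarrow> 'v set \<Rightarrow> ('v set \<Rightarrow> real) \<Rightarrow> 'v set \<Rightarrow> 'v set set" where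
  "ES V E T c S = (THE F. is_min_cutset V E T c S F)"

definition elementary ::
  "'v set \<Rightarrow> 'v set set \<Rightarrow> 'v set \<Rightarrow> ('v set \<Rightarrow> real) \<Rightarrow> 'v set \<Rightarrow> bool" where
  "elementary V E T c C \<longleftrightarrow>
     proper_terminal_subset T (C \<inter> T) \<and>
     cutset E C = ES V E T c (C \<inter> T) \<and>
     card (CC V E (cutset E C)) = 2"

end

theory Submission imports Defs begin

text \<open>Let \<open>W\<close> be a minimum \<open>S\<close>-separating set, so \<open>E\<^sub>S = \<delta>(W)\<close>, and let \<open>C\<close> be a
  component of \<open>(V, E - E\<^sub>S)\<close>, say \<open>C \<subseteq> W\<close>. No edge joins \<open>C\<close> to \<open>W - C\<close>, so
  \<open>c(\<delta>(W)) = c(\<delta>(C)) + c(\<delta>(W - C))\<close>; and for every \<open>X\<close> with \<open>X \<inter> T = C \<inter> T\<close> the set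
  \<open>(W - C) \<union> X\<close> is \<open>S\<close>-separating with \<open>c(\<delta>((W - C) \<union> X)) \<le> c(\<delta>(W - C)) + c(\<delta>(X))\<close>.
  Hence \<open>\<delta>(C)\<close> is a cheapest cut with terminal side \<open>C \<inter> T\<close>, which is non-empty because
  capacities are positive, and uniqueness gives \<open>\<delta>(C) = E\<^bsub>C \<inter> T\<^esub>\<close>.
  It remains to pick \<open>C\<close> so that \<open>V - C\<close> is connected in \<open>(V, E - \<delta>(C))\<close>, i.e. a leaf of the
  tree-like arrangement of the components: take a component \<open>C\<close> and a vertex \<open>v \<notin> C\<close> such
  that the component of \<open>v\<close> in \<open>(V, E - \<delta>(C))\<close> is as large as possible.\<close>

definition component :: "'v set \<Rightarrow> 'v set set \<Rightarrow> 'v set set \<Rightarrow> 'v \<Rightarrow> 'v set" where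
  "component V E F u = {v \<in> V. (u, v) \<in> (adj E F)\<^sup>*}"

lemma CC_eq_component_image: "CC V E F = component V E F ` V"
  by (auto simp: CC_def component_def)

lemma CC_subset: "C \<in> CC V E F \<Longrightarrow> C \<subseteq> V"
  by (auto simp: CC_eq_component_image component_def)

lemma adj_rtrancl_sym:
  assumes "(u, v) \<in> (adj E F)\<^sup>*"
  shows "(v, u) \<in> (adj E F)\<^sup>*"
proof -
  have "sym (adj E F)" by (auto simp: sym_def adj_def insert_commute)
  then show ?thesis using assms sym_rtrancl symD by metis
qed

lemma component_self: "u \<in> V \<Longrightarrow> u \<in> component V E F u"
  by (simp add: component_def)

lemma component_subset: "component V E F u \<subseteq> V"
  by (auto simp: component_def)

lemma component_eq:
  assumes "v \<in> component V E F u"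
  shows "component V E F v = component V E F u"
proof -
  have "(u, v) \<in> (adj E F)\<^sup>*" "(v, u) \<in> (adj E F)\<^sup>*"
    using assms adj_rtrancl_sym by (auto simp: component_def)
  then show ?thesis by (auto simp: component_def intro: rtrancl_trans)
qed

lemma component_disjoint:
  assumes "v \<in> V" and "v \<notin> component V E F u"
  shows "component V E F v \<inter> component V E F u = {}"
proof (rule ccontr)
  assume "component V E F v \<inter> component V E F u \<noteq> {}"
  then obtain x where "x \<in> component V E F v" "x \<in> component V E F u" by blast
  then have "component V E F v = component V E F u"
    using component_eq[of x V E F v] component_eq[of x V E F u] by simp
  moreover have "v \<in> component V E F v" using assms(1) by (rule component_self)
  ultimately show False using assms by simp
qed

lemma CCE:
  assumes "C \<in> CC V E F"
  obtains x where "x \<in> V" "x \<in> C" "C = component V E F x"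
proof -
  obtain x where "x \<in> V" "C = component V E F x"
    using assms unfolding CC_eq_component_image by blast
  with component_self[of x V E F] show thesis using that by simp
qed

lemma CC_component_eq:
  assumes "C \<in> CC V E F" and "y \<in> C"
  shows "component V E F y = C"
proof -
  obtain x where "C = component V E F x" using assms(1) by (rule CCE)
  with assms(2) show ?thesis using component_eq[of y V E F x] by simp
qed

lemma component_neighbor:
  "{a, b} \<in> E - F \<Longrightarrow> a \<in> component V E F u \<Longrightarrow> b \<in> V \<Longrightarrow> b \<in> component V E F u"
  by (auto simp: component_def adj_def intro: rtrancl_into_rtrancl)

lemma component_subset_if_cutset_subset:
  assumes "cutset E X \<subseteq> F" and "u \<in> X"
  shows "component V E F u \<subseteq> X"
proof
  fix v assume "v \<in> component V E F u"
  then have "(u, v) \<in> (adj E F)\<^sup>*" by (simp add: component_def)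
  then show "v \<in> X"
  proof (induction rule: rtrancl_induct)
    case base
    show ?case using \<open>u \<in> X\<close> .
  next
    case (step y z)
    then have "{y, z} \<in> E - F" by (simp add: adj_def)
    with assms(1) have "card ({y, z} \<inter> X) \<noteq> 1" by (auto simp: cutset_def)
    with \<open>y \<in> X\<close> show "z \<in> X" by (cases "z = y") auto
  qed
qed

locale graph =
  fixes V :: "'v set" and E :: "'v set set"
  assumes edges: "\<forall>e\<in>E. e \<subseteq> V \<and> card e = 2"
begin

lemma edgeE:
  assumes "e \<in> E"
  obtains a b where "e = {a, b}" "a \<noteq> b" "a \<in> V" "b \<in> V"
proof -
  obtain a b where "e = {a, b}" "a \<noteq> b" using assms edges card_2_iff by metis
  with assms edges that show ?thesis by auto
qed

lemma edge_in_cutset_iff: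
  assumes "{a, b} \<in> E"
  shows "{a, b} \<in> cutset E X \<longleftrightarrow> (a \<in> X \<longleftrightarrow> b \<notin> X)"
proof -
  have "a \<noteq> b" using assms edges by fastforce
  then show ?thesis
    using assms by (cases "a \<in> X"; cases "b \<in> X") (auto simp: cutset_def)
qed

lemma cutset_iff: "e \<in> cutset E X \<longleftrightarrow> e \<in> E \<and> (\<exists>a b. e = {a, b} \<and> a \<in> X \<and> b \<notin> X)"
proof (cases "e \<in> E")
  case True
  then obtain x y where "e = {x, y}" "x \<noteq> y" by (rule edgeE)
  then show ?thesis
    using True edge_in_cutset_iff[of x y X] by (auto simp: doubleton_eq_iff)
qed (simp add: cutset_def)

lemma cutset_Diff: "cutset E (V - X) = cutset E X"
proof (rule set_eqI)
  fix e show "e \<in> cutset E (V - X) \<longleftrightarrow> e \<in> cutset E X"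
  proof (cases "e \<in> E")
    case True
    then obtain a b where "e = {a, b}" "a \<in> V" "b \<in> V" by (rule edgeE)
    then show ?thesis using True edge_in_cutset_iff by auto
  qed (simp add: cutset_def)
qed

lemma cutset_Un_subset: "cutset E (A \<union> B) \<subseteq> cutset E A \<union> cutset E B"
  unfolding subset_iff Un_iff cutset_iff by blast

lemma cutset_Un_disjoint:
  assumes "\<forall>e\<in>E. e \<inter> A = {} \<or> e \<inter> B = {}"
  shows "cutset E (A \<union> B) = cutset E A \<union> cutset E B"
    and "cutset E A \<inter> cutset E B = {}"
  using assms unfolding set_eq_iff Un_iff Int_iff cutset_iff by blast+

lemma cutset_component_subset: "cutset E (component V E F u) \<subseteq> F"
proof
  fix e assume "e \<in> cutset E (component V E F u)"
  then obtain a b where "e \<in> E" "e = {a, b}" "a \<in> component V E F u" "b \<notin> component V E F u"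
    unfolding cutset_iff by blast
  moreover have "b \<in> V" using calculation edges by auto
  ultimately show "e \<in> F" using component_neighbor[of a b E F V u] by auto
qed

lemma component_subset_component:
  assumes "\<forall>e\<in>F2 - F1. \<not> e \<subseteq> component V E F1 u"
  shows "component V E F1 u \<subseteq> component V E F2 u"
proof
  fix v assume "v \<in> component V E F1 u"
  then have "v \<in> V" "(u, v) \<in> (adj E F1)\<^sup>*" by (auto simp: component_def)
  moreover have "(u, v) \<in> (adj E F2)\<^sup>*" using \<open>(u, v) \<in> (adj E F1)\<^sup>*\<close>
  proof (induction rule: rtrancl_induct)
    case (step y z)
    then have yz: "{y, z} \<in> E - F1" by (simp add: adj_def)
    then have "y \<in> V" "z \<in> V" using edges by auto
    then have "{y, z} \<subseteq> component V E F1 u"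
      using step(1,2) by (auto simp: component_def intro: rtrancl_into_rtrancl)
    then have "{y, z} \<notin> F2" using yz assms by blast
    then have "(y, z) \<in> adj E F2" using yz by (simp add: adj_def)
    with step(3) show ?case by (rule rtrancl_into_rtrancl)
  qed simp
  ultimately show "v \<in> component V E F2 u" by (simp add: component_def)
qed

lemma component_antimono: "F' \<subseteq> F \<Longrightarrow> component V E F u \<subseteq> component V E F' u"
  by (rule component_subset_component) blast

lemma component_cutset_component:
  assumes "C \<in> CC V E F" and "y \<in> C"
  shows "component V E (cutset E C) y = C"
proof
  show "component V E (cutset E C) y \<subseteq> C"
    using assms(2) by (rule component_subset_if_cutset_subset[OF order_refl])
  have "C = component V E F y" using assms by (simp add: CC_component_eq)
  then show "C \<subseteq> component V E (cutset E C) y"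
    using component_antimono[OF cutset_component_subset[of F y]] by simp
qed

lemma component_subset_component_cutset:
  assumes "X \<inter> component V E F u = {}"
  shows "component V E F u \<subseteq> component V E (cutset E X) u"
proof (rule component_subset_component, intro ballI notI)
  fix e assume "e \<in> cutset E X - F" and "e \<subseteq> component V E F u"
  then have "e \<in> cutset E X" by blast
  then obtain a b where "e = {a, b}" "a \<in> X" unfolding cutset_iff by blast
  with \<open>e \<subseteq> component V E F u\<close> show False using assms by blast
qed

lemma component_cutset_complement:
  "u \<in> V - C \<Longrightarrow> component V E (cutset E C) u \<subseteq> V - C"
  by (rule component_subset_if_cutset_subset) (simp_all add: cutset_Diff)

lemma cutset_subset_if_in_CC:
  assumes "C \<in> CC V E F"
  shows "cutset E C \<subseteq> F"
proof -
  obtain x where "C = component V E F x" using assms by (rule CCE)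
  then show ?thesis by (simp add: cutset_component_subset)
qed

lemma edge_subset_component:
  assumes "C \<in> CC V E F" and "e \<in> E - F" and "e \<inter> C \<noteq> {}"
  shows "e \<subseteq> C"
proof -
  obtain x where C: "C = component V E F x" using assms(1) by (rule CCE)
  obtain a b where e: "e = {a, b}" "a \<in> V" "b \<in> V" using assms(2) by (auto elim: edgeE)
  have "{b, a} \<in> E - F" using assms(2) e(1) by (simp add: insert_commute)
  then show ?thesis
    using assms(2,3) e component_neighbor[of a b E F V x] component_neighbor[of b a E F V x]
    unfolding C by auto
qed

lemma CC_cutset_component:
  assumes "C \<in> CC V E F" and "v \<in> V - C" and "component V E (cutset E C) v = V - C"
  shows "CC V E (cutset E C) = {C, V - C}"
proof -
  have outside: "component V E (cutset E C) y = V - C" if "y \<in> V - C" for y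
    using that assms(3) component_eq[of y V E "cutset E C" v] by simp
  have inside: "component V E (cutset E C) y = C" if "y \<in> C" for y
    using assms(1) that by (rule component_cutset_component)
  obtain x where "x \<in> C" "x \<in> V" using assms(1) by (rule CCE)
  have "component V E (cutset E C) ` V \<subseteq> {C, V - C}"
    using inside outside by blast
  moreover have "C \<in> component V E (cutset E C) ` V"
    using inside[OF \<open>x \<in> C\<close>] \<open>x \<in> V\<close> by (metis image_eqI)
  moreover have "V - C \<in> component V E (cutset E C) ` V"
    using outside[OF assms(2)] assms(2) by (metis DiffD1 image_eqI)
  ultimately show ?thesis unfolding CC_eq_component_image by blast
qed

end

locale finite_connected_graph = graph +
  assumes finite_vertices: "finite V" and connected: "graph_connected V E"
begin

lemma finite_edges: "finite E"
  using edges finite_vertices by (meson Pow_iff finite_Pow_iff finite_subset subsetI)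

lemma cutset_nonempty:
  assumes "a \<in> V" "a \<in> X" "b \<in> V - X"
  shows "cutset E X \<noteq> {}"
proof
  assume "cutset E X = {}"
  then have "component V E {} a \<subseteq> X"
    using assms(2) by (intro component_subset_if_cutset_subset) auto
  moreover have "b \<in> component V E {} a"
    using connected assms unfolding graph_connected_def component_def by auto
  ultimately show False using assms(3) by blast
qed

lemma cutset_edge_leaving_component:
  assumes "w \<in> V - C" and "u \<in> V - component V E (cutset E C) w"
  obtains a b where "{a, b} \<in> cutset E C" "a \<in> component V E (cutset E C) w" "b \<in> C"
proof -
  let ?K = "component V E (cutset E C) w"
  have "w \<in> ?K" using assms(1) by (simp add: component_self)
  then obtain e where e: "e \<in> cutset E ?K" using cutset_nonempty[of w ?K u] assms by auto
  then obtain a b where ab: "e = {a, b}" "a \<in> ?K" "b \<notin> ?K" by (auto simp: cutset_iff)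
  have "e \<in> cutset E C" using e cutset_component_subset by blast
  moreover have "a \<notin> C" using ab(2) component_cutset_complement[OF assms(1)] by blast
  ultimately have "b \<in> C" using ab(1) by (auto simp: cutset_iff doubleton_eq_iff)
  with ab \<open>e \<in> cutset E C\<close> show thesis using that by blast
qed

text \<open>\<open>C'\<close> is the component of \<open>(V, E - F)\<close> at the far end of an edge from \<open>C\<close> into the
  part of \<open>V - C\<close> not reached from \<open>v\<close>; cutting around \<open>C'\<close> instead of \<open>C\<close> merges \<open>C\<close> into
  the component of \<open>v\<close>.\<close>
lemma component_cutset_grows:
  assumes C: "C \<in> CC V E F" and v: "v \<in> V - C"
    and w: "w \<in> V - C - component V E (cutset E C) v"
  obtains C' where "C' \<in> CC V E F" "v \<notin> C'"
    "component V E (cutset E C) v \<union> C \<subseteq> component V E (cutset E C') v"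
proof -
  let ?K = "component V E (cutset E C) v" and ?L = "component V E (cutset E C) w"
  have KL: "?L \<inter> ?K = {}" using w by (intro component_disjoint) auto
  have "v \<in> ?K" using v by (simp add: component_self)
  then have "v \<in> V - ?L" using KL v by blast
  then obtain a b where "{a, b} \<in> cutset E C" "a \<in> ?L"
    using cutset_edge_leaving_component[of w C v] w by blast
  define C' where "C' = component V E F a"
  have "a \<in> V" using \<open>a \<in> ?L\<close> component_subset[of V E "cutset E C" w] by blast
  then have C'_CC: "C' \<in> CC V E F" unfolding C'_def CC_eq_component_image by blast
  have "C' \<subseteq> component V E (cutset E C) a"
    unfolding C'_def using cutset_subset_if_in_CC[OF C] by (rule component_antimono)
  also have "\<dots> = ?L" using \<open>a \<in> ?L\<close> by (rule component_eq)
  finally have C'L: "C' \<subseteq> ?L" .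
  have "?L \<subseteq> V - C" using w by (intro component_cutset_complement) auto
  with C'L KL have C'_disj: "C' \<inter> ?K = {}" "C' \<inter> C = {}" by blast+
  have K_sub: "?K \<subseteq> component V E (cutset E C') v"
    using C'_disj(1) by (rule component_subset_component_cutset)
  have "w \<in> V - ?K" using w by blast
  then obtain p q where pq: "{p, q} \<in> cutset E C" "p \<in> ?K" "q \<in> C"
    using cutset_edge_leaving_component[of v C w] v by blast
  have "{p, q} \<inter> C' = {}" using pq(2,3) C'_disj by blast
  then have "{p, q} \<notin> cutset E C'" by (simp add: cutset_def)
  then have "{p, q} \<in> E - cutset E C'" using pq(1) by (simp add: cutset_def)
  moreover have "q \<in> V" using pq(3) CC_subset[OF C] by blast
  ultimately have "q \<in> component V E (cutset E C') v"
    using component_neighbor[of p q E "cutset E C'" V v] K_sub pq(2) by blast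
  then have "component V E (cutset E C') q = component V E (cutset E C') v"
    by (rule component_eq)
  moreover have "C \<subseteq> component V E (cutset E C') q"
    using CC_component_eq[OF C pq(3)] cutset_subset_if_in_CC[OF C'_CC]
    by (metis component_antimono)
  ultimately have "?K \<union> C \<subseteq> component V E (cutset E C') v" using K_sub by simp
  moreover have "v \<notin> C'" using C'_disj(1) \<open>v \<in> ?K\<close> by blast
  ultimately show thesis using C'_CC that by blast
qed

lemma ex_component_with_connected_complement:
  assumes "C\<^sub>0 \<in> CC V E F" and "C\<^sub>0 \<noteq> V"
  obtains C where "C \<in> CC V E F" "CC V E (cutset E C) = {C, V - C}"
proof -
  define admissible where "admissible = (\<lambda>(C, v). C \<in> CC V E F \<and> v \<in> V - C)"
  define size where "size = (\<lambda>(C, v). card (component V E (cutset E C) v))"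
  obtain v\<^sub>0 where "v\<^sub>0 \<in> V - C\<^sub>0"
    using assms CC_subset by blast
  then have "admissible (C\<^sub>0, v\<^sub>0)" using assms(1) by (simp add: admissible_def)
  moreover have "size p < Suc (card V)" for p
    by (cases p) (simp add: size_def le_imp_less_Suc card_mono[OF finite_vertices component_subset])
  ultimately obtain p where "admissible p" and p_max: "\<forall>q. admissible q \<longrightarrow> size q \<le> size p"
    using ex_has_greatest_nat[of admissible "(C\<^sub>0, v\<^sub>0)" size "Suc (card V)"] by blast
  then obtain C v where p: "p = (C, v)" and C: "C \<in> CC V E F" and v: "v \<in> V - C"
    by (auto simp: admissible_def)
  let ?K = "component V E (cutset E C) v"
  have "?K = V - C"
  proof (rule ccontr)
    assume "?K \<noteq> V - C"
    moreover have "?K \<subseteq> V - C" using v by (rule component_cutset_complement)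
    ultimately obtain w where "w \<in> V - C - ?K" by blast
    with C v obtain C' where C': "C' \<in> CC V E F" "v \<notin> C'"
      and grows: "?K \<union> C \<subseteq> component V E (cutset E C') v"
      by (rule component_cutset_grows)
    obtain x where "x \<in> C" using C by (rule CCE)
    with \<open>?K \<subseteq> V - C\<close> have "?K \<subset> ?K \<union> C" by blast
    moreover have "finite (?K \<union> C)"
      using finite_vertices CC_subset[OF C] component_subset[of V E "cutset E C" v]
      by (metis finite_Un finite_subset)
    ultimately have "card ?K < card (?K \<union> C)" by (intro psubset_card_mono)
    also have "\<dots> \<le> card (component V E (cutset E C') v)"
      using grows by (intro card_mono finite_subset[OF component_subset finite_vertices])
    finally have "size p < size (C', v)" by (simp add: p size_def)
    moreover have "admissible (C', v)" using C' v by (simp add: admissible_def)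
    ultimately show False using p_max by fastforce
  qed
  with C v show thesis using that CC_cutset_component by blast
qed

end

lemma ES_eqI:
  assumes "unique_mincuts V E T c" and "proper_terminal_subset T S"
    and "is_min_cutset V E T c S F"
  shows "ES V E T c S = F"
  using assms unfolding unique_mincuts_def ES_def by (metis the1_equality)

lemma ES_is_min_cutset:
  assumes "unique_mincuts V E T c" and "proper_terminal_subset T S"
  shows "is_min_cutset V E T c S (ES V E T c S)"
  using assms unfolding unique_mincuts_def ES_def by (metis theI')

locale network = finite_connected_graph +
  fixes T :: "'v set" and c :: "'v set \<Rightarrow> real"
  assumes terminals: "T \<subseteq> V" and capacities_pos: "\<forall>e\<in>E. c e > 0"
begin

lemma cost_cutset_pos: "cutset E X \<noteq> {} \<Longrightarrow> cost c (cutset E X) > 0"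
  unfolding cost_def using finite_edges capacities_pos
  by (intro sum_pos) (auto simp: cutset_def intro: finite_subset)

lemma cost_cutset_Un_le: "cost c (cutset E (A \<union> B)) \<le> cost c (cutset E A) + cost c (cutset E B)"
proof -
  have fin: "finite (cutset E X)" for X
    using finite_edges by (simp add: cutset_def)
  have nonneg: "0 \<le> c e" if "e \<in> cutset E X" for e X
    using that capacities_pos by (auto simp: cutset_def less_imp_le)
  have "cost c (cutset E (A \<union> B)) \<le> cost c (cutset E A \<union> cutset E B)"
    unfolding cost_def using cutset_Un_subset fin nonneg by (intro sum_mono2) auto
  also have "\<dots> \<le> cost c (cutset E A) + cost c (cutset E B)"
  proof -
    have "0 \<le> sum c (cutset E A \<inter> cutset E B)" using nonneg by (intro sum_nonneg) blast
    then show ?thesis unfolding cost_def sum_Un[OF fin fin] by simp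
  qed
  finally show ?thesis .
qed

lemma cost_cutset_Un_disjoint:
  assumes "\<forall>e\<in>E. e \<inter> A = {} \<or> e \<inter> B = {}"
  shows "cost c (cutset E (A \<union> B)) = cost c (cutset E A) + cost c (cutset E B)"
  unfolding cost_def cutset_Un_disjoint(1)[OF assms] using finite_edges cutset_Un_disjoint(2)[OF assms]
  by (intro sum.union_disjoint) (auto simp: cutset_def)

lemma separating_Diff:
  assumes "separating V T S W" and "S \<subseteq> T"
  shows "separating V T S (V - W)"
  using assms terminals unfolding separating_def by blast

lemma min_cutset_side:
  assumes "is_min_cutset V E T c S F" and "S \<subseteq> T" and "x \<in> V"
  obtains W where "separating V T S W" "F = cutset E W" "x \<in> W"
proof -
  obtain W where W: "separating V T S W" "F = cutset E W"
    using assms(1) unfolding is_min_cutset_def by blast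
  show thesis
  proof (cases "x \<in> W")
    case False
    then show thesis
      using that[of "V - W"] W separating_Diff[OF W(1) assms(2)] assms(3) cutset_Diff by simp
  qed (use that W in blast)
qed

lemma cost_component_cutset_le:
  assumes min: "is_min_cutset V E T c S (cutset E W)" and W: "separating V T S W"
    and C: "C \<in> CC V E (cutset E W)" "C \<subseteq> W"
    and X: "X \<subseteq> V" "X \<inter> T = C \<inter> T"
  shows "cost c (cutset E C) \<le> cost c (cutset E X)"
proof -
  define D where "D = W - C"
  have no_edge: "\<forall>e\<in>E. e \<inter> C = {} \<or> e \<inter> D = {}"
  proof (intro ballI)
    fix e assume "e \<in> E"
    then obtain a b where e: "e = {a, b}" by (rule edgeE)
    show "e \<inter> C = {} \<or> e \<inter> D = {}"
    proof (cases "e \<in> cutset E W")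
      case True
      then show ?thesis using e C(2) unfolding D_def cutset_iff by (auto simp: doubleton_eq_iff)
    next
      case False
      then show ?thesis
        using edge_subset_component[OF C(1), of e] \<open>e \<in> E\<close> unfolding D_def by blast
    qed
  qed
  have "separating V T S (D \<union> X)"
    using W X C(2) unfolding separating_def D_def by blast
  then have "cost c (cutset E W) \<le> cost c (cutset E (D \<union> X))"
    using min unfolding is_min_cutset_def by blast
  also have "\<dots> \<le> cost c (cutset E D) + cost c (cutset E X)"
    by (rule cost_cutset_Un_le)
  finally show ?thesis
    using cost_cutset_Un_disjoint[OF no_edge] C(2) unfolding D_def
    by (simp add: Un_absorb1 Un_Diff_cancel)
qed

lemma is_min_cutsetI:
  assumes "A \<subseteq> V" and "\<forall>X. X \<subseteq> V \<longrightarrow> X \<inter> T = A \<inter> T \<longrightarrow> cost c (cutset E A) \<le> cost c (cutset E X)"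
  shows "is_min_cutset V E T c (A \<inter> T) (cutset E A)"
  unfolding is_min_cutset_def
proof (intro conjI allI impI)
  show "\<exists>W. separating V T (A \<inter> T) W \<and> cutset E A = cutset E W"
    using assms(1) unfolding separating_def by blast
next
  fix Y assume Y: "separating V T (A \<inter> T) Y"
  show "cost c (cutset E A) \<le> cost c (cutset E Y)"
  proof (cases "Y \<inter> T = A \<inter> T")
    case True
    then show ?thesis using assms(2) Y unfolding separating_def by blast
  next
    case False
    then have "(V - Y) \<inter> T = A \<inter> T" using Y terminals unfolding separating_def by blast
    then show ?thesis using assms(2) cutset_Diff[of Y] by (metis Diff_subset)
  qed
qed

lemma component_of_min_cutset:
  assumes min: "is_min_cutset V E T c S F" and S: "proper_terminal_subset T S"
    and C: "C \<in> CC V E F"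
  shows "proper_terminal_subset T (C \<inter> T)" and "is_min_cutset V E T c (C \<inter> T) (cutset E C)"
proof -
  obtain x where x: "x \<in> V" "x \<in> C" "C = component V E F x" using C by (rule CCE)
  have "S \<subseteq> T" using S by (simp add: proper_terminal_subset_def)
  obtain W where W: "separating V T S W" "F = cutset E W" "x \<in> W"
    using min \<open>S \<subseteq> T\<close> x(1) by (rule min_cutset_side)
  have CW: "C \<subseteq> W" unfolding x(3) W(2) using W(3) by (rule component_subset_if_cutset_subset[OF order_refl])
  have C_min: "\<forall>X. X \<subseteq> V \<longrightarrow> X \<inter> T = C \<inter> T \<longrightarrow> cost c (cutset E C) \<le> cost c (cutset E X)"
    using cost_component_cutset_le[OF min[unfolded W(2)] W(1) C[unfolded W(2)] CW] by blast
  obtain t where t: "t \<in> T - W"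
    using W(1) S unfolding separating_def proper_terminal_subset_def by blast
  have "cutset E C \<noteq> {}"
    using x t CW terminals by (intro cutset_nonempty[of x _ t]) auto
  then have "cost c (cutset E C) > 0" by (rule cost_cutset_pos)
  moreover have "cost c (cutset E {}) = 0" by (simp add: cutset_def cost_def)
  ultimately have "C \<inter> T \<noteq> {}" using C_min by (metis empty_subsetI inf_bot_left not_le)
  moreover have "C \<inter> T \<noteq> T" using t CW by blast
  ultimately show "proper_terminal_subset T (C \<inter> T)"
    unfolding proper_terminal_subset_def by blast
  show "is_min_cutset V E T c (C \<inter> T) (cutset E C)"
    using CC_subset[OF C] C_min by (rule is_min_cutsetI)
qed

end

theorem lemma2p4:
  fixes V :: "'v set" and E :: "'v set set" and T S :: "'v set"
    and c :: "'v set \<Rightarrow> real" and k :: nat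
  assumes "k_terminal_network V E T c k"
    and "unique_mincuts V E T c"
    and "proper_terminal_subset T S"
  shows "\<exists>C\<in>CC V E (ES V E T c S). elementary V E T c C"
proof -
  interpret network V E T c
    using assms(1) unfolding k_terminal_network_def by unfold_locales auto
  let ?F = "ES V E T c S"
  have min: "is_min_cutset V E T c S ?F" using assms(2,3) by (rule ES_is_min_cutset)
  obtain W where W: "separating V T S W" "?F = cutset E W"
    using min unfolding is_min_cutset_def by blast
  obtain t t' where t: "t \<in> W \<inter> T" "t' \<in> T - W"
    using W(1) assms(3) unfolding separating_def proper_terminal_subset_def by blast
  have "component V E ?F t \<in> CC V E ?F"
    using t(1) terminals unfolding CC_eq_component_image by blast
  moreover have "component V E ?F t \<noteq> V"
    using component_subset_if_cutset_subset[of E W ?F t V] W(2) t terminals by blast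
  ultimately obtain C where C: "C \<in> CC V E ?F" and CC_C: "CC V E (cutset E C) = {C, V - C}"
    by (rule ex_component_with_connected_complement)
  obtain x where "x \<in> C" using C by (rule CCE)
  then have "C \<noteq> V - C" by blast
  then have "card (CC V E (cutset E C)) = 2" unfolding CC_C by simp
  moreover have "ES V E T c (C \<inter> T) = cutset E C"
    using assms(2) component_of_min_cutset[OF min assms(3) C] by (rule ES_eqI)
  ultimately have "elementary V E T c C"
    using component_of_min_cutset(1)[OF min assms(3) C] unfolding elementary_def by simp
  with C show ?thesis by blast
qed

end
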